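(* Let $d\ge2$ and let $\theta_{d0},\theta_{d-1,1},\dots,\theta_{0d}$ be real numbers with $\theta_{d0}\neq0$. Let $P(\theta)$ be the $(2d-2)\times(2d-2)$ matrix defined as follows: for $k=1,\dots,d-1$ and $m=0,\dots,d-1$, the entry in row $k$, column $k+m$ is $(d-m)\theta_{d-m,m}$; the entry in row $d-1+k$, column $k+m$ is $(m+1)\theta_{d-1-m,m+1}$; all other entries are $0$. (Thus the first $d-1$ rows are successive shifts of $(d\theta_{d0},(d-1)\theta_{d-1,1},\dots,2\theta_{2,d-2},\theta_{1,d-1})$ and the last $d-1$ rows are successive shifts of $(\theta_{d-1,1},2\theta_{d-2,2},\dots,d\theta_{0d})$.) Let $p(x;\theta)=\theta_{d0}x^d+\theta_{d-1,1}x^{d-1}+\dots+\theta_{1,d-1}x+\theta_{0d}$, and let $R(p,p')$ be the determinant of the $(2d-1)\times(2d-1)$ matrix whose first $d-1$ rows are successive shifts of the coefficient row $(\theta_{d0},\theta_{d-1,1},\dots,\theta_{0d})$ of $p$ and whose last $d$ rows are successive shifts of the coefficient row $(d\theta_{d0},(d-1)\theta_{d-1,1},\dots,\theta_{1,d-1})$ of $p'$ (each shift moving one column to the right, zeros elsewhere). Define $D(\theta)=R(p,p')/\theta_{d0}$. Then $$\det P(\theta)=d^{\,d-2}D(\theta).$$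
   Context: $D(\theta)$ is (the paper's normalization of) the discriminant of the polynomial equation $p(x;\theta)=0$; $P(\theta)$ is the coefficient matrix of the linear system determining the highest-order derivatives of the bivariate normalizing constant in the Pfaffian system. *)

theory Defs
  imports "Jordan_Normal_Form.Determinant"
begin

text \<open>Coefficients are given as a function th with th i j standing for theta_{i j};
  only the values with i + j = d are used.  Matrices are 0-indexed.\<close>

definition Pmat :: "nat \<Rightarrow> (nat \<Rightarrow> nat \<Rightarrow> real) \<Rightarrow> real mat" where
  "Pmat d th = mat (2*d-2) (2*d-2) (\<lambda>(r,c).
     if r < d - 1 then
       (if r \<le> c \<and> c - r \<le> d - 1 then real (d - (c - r)) * th (d - (c - r)) (c - r) else 0)
     else
       (let s = r - (d - 1) in
        if s \<le> c \<and> c - s \<le> d - 1 then real (c - s + 1) * th (d - 1 - (c - s)) (c - s + 1) else 0))"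

definition sylv_p_dp :: "nat \<Rightarrow> (nat \<Rightarrow> nat \<Rightarrow> real) \<Rightarrow> real mat" where
  "sylv_p_dp d th = mat (2*d-1) (2*d-1) (\<lambda>(r,c).
     if r < d - 1 then
       (if r \<le> c \<and> c - r \<le> d then th (d - (c - r)) (c - r) else 0)
     else
       (let s = r - (d - 1) in
        if s \<le> c \<and> c - s \<le> d - 1 then real (d - (c - s)) * th (d - (c - s)) (c - s) else 0))"

definition Rpdp :: "nat \<Rightarrow> (nat \<Rightarrow> nat \<Rightarrow> real) \<Rightarrow> real" where
  "Rpdp d th = det (sylv_p_dp d th)"

definition Dtheta :: "nat \<Rightarrow> (nat \<Rightarrow> nat \<Rightarrow> real) \<Rightarrow> real" where
  "Dtheta d th = Rpdp d th / th d 0"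

end

theory Submission
  imports Defs
begin

text \<open>Write \<open>d = n + 1\<close>.  Replacing each of the first \<open>n\<close> rows \<open>x^i p\<close> of the Sylvester
  matrix of \<open>p, p'\<close> by \<open>d x^i p - x^i (x p')\<close> multiplies the determinant by \<open>d^n\<close>, and by
  Euler's identity \<open>d p - x p' = \<Sum>m. m \<theta>(d-m,m) x^(d-m)\<close> the new rows have no \<open>x^d\<close> term.
  The first column then contains only the leading coefficient \<open>d \<theta>(d,0)\<close> of \<open>p'\<close>, and the
  complementary minor is \<open>P(\<theta>)\<close> with its two row blocks swapped, a swap whose sign cancels
  the cofactor sign.\<close>

definition scale_sub_rows :: "'a :: comm_ring_1 \<Rightarrow> nat \<Rightarrow> 'a mat \<Rightarrow> 'a mat" where
  "scale_sub_rows a n S = mat (dim_row S) (dim_col S)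
     (\<lambda>(r,c). if r < n then a * S $$ (r,c) - S $$ (r+n,c) else S $$ (r,c))"

lemma dim_scale_sub_rows [simp]:
  "dim_row (scale_sub_rows a n S) = dim_row S" "dim_col (scale_sub_rows a n S) = dim_col S"
  by (simp_all add: scale_sub_rows_def)

lemma det_scale_sub_rows:
  fixes S :: "'a :: comm_ring_1 mat"
  assumes S: "S \<in> carrier_mat N N" and n: "2 * n \<le> N"
  shows "det (scale_sub_rows a n S) = a ^ n * det S"
proof -
  define E where "E = mat N N (\<lambda>(r,k).
      (if k = r then if r < n then a else 1 else 0) + (if r < n \<and> k = r + n then -1 else 0))"
  have E: "E \<in> carrier_mat N N" unfolding E_def by simp
  have "E * S = scale_sub_rows a n S"
  proof (rule eq_matI)
    fix r c assume "r < dim_row (scale_sub_rows a n S)" "c < dim_col (scale_sub_rows a n S)"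
    then have r: "r < N" and c: "c < N" using S by auto
    have "(E * S) $$ (r,c) = (\<Sum>k<N. E $$ (r,k) * S $$ (k,c))"
      using E S r c by (simp add: scalar_prod_def lessThan_atLeast0)
    also have "\<dots> = (\<Sum>k<N. (if k = r then (if r < n then a else 1) * S $$ (k,c) else 0)
                             + (if r < n \<and> k = r + n then - S $$ (k,c) else 0))"
      using r by (intro sum.cong refl) (auto simp: E_def)
    also have "\<dots> = scale_sub_rows a n S $$ (r,c)"
      using r c n S by (simp add: sum.distrib scale_sub_rows_def)
    finally show "(E * S) $$ (r,c) = scale_sub_rows a n S $$ (r,c)" .
  qed (use S in \<open>auto simp: E_def scale_sub_rows_def\<close>)
  moreover have "det E = a ^ n"
  proof -
    have "upper_triangular E" unfolding upper_triangular_def E_def by auto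
    then have "det E = prod_list (diag_mat E)"
      using E by (rule det_upper_triangular)
    also have "\<dots> = (\<Prod>i<N. if i < n then a else 1)"
      unfolding diag_mat_def
      by (subst prod.distinct_set_conv_list[symmetric])
         (auto simp: E_def atLeast0LessThan intro!: prod.cong)
    also have "\<dots> = (\<Prod>i<n. a)"
      using n by (intro prod.mono_neutral_cong_right) auto
    finally show ?thesis by simp
  qed
  ultimately show ?thesis using det_mult[OF E S] by simp
qed

lemma det_single_entry_column:
  fixes A :: "'a :: comm_ring_1 mat"
  assumes A: "A \<in> carrier_mat N N" and k: "k < N" and j: "j < N"
    and zero: "\<And>i. i < N \<Longrightarrow> i \<noteq> k \<Longrightarrow> A $$ (i,j) = 0"
  shows "det A = A $$ (k,j) * cofactor A k j"
proof -
  have "det A = (\<Sum>i<N. A $$ (i,j) * cofactor A i j)"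
    by (rule laplace_expansion_column[OF A j])
  also have "\<dots> = (\<Sum>i\<in>{k}. A $$ (i,j) * cofactor A i j)"
    using k zero by (intro sum.mono_neutral_cong_right) auto
  finally show ?thesis by simp
qed

lemma sylv_p_dp_carrier: "sylv_p_dp d th \<in> carrier_mat (2*d-1) (2*d-1)"
  by (simp add: sylv_p_dp_def)

text \<open>The degree is kept as a variable \<open>d\<close> with \<open>d = Suc n\<close> rather than written \<open>Suc n\<close>,
  since the simplifier would turn \<open>real (Suc n)\<close> into \<open>1 + real n\<close> and the entry formulas
  below would no longer apply as rewrite rules.\<close>

lemma sylv_p_dp_eliminated_entry:
  assumes d: "d = Suc n" and "r < 2*n+1" "c < 2*n+1"
  shows "scale_sub_rows (real d) n (sylv_p_dp d th) $$ (r,c) =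
    (if r < n then
       (if r \<le> c \<and> c - r \<le> d then real (c - r) * th (d - (c - r)) (c - r) else 0)
     else if r - n \<le> c \<and> c - (r - n) \<le> n
       then real (d - (c - (r - n))) * th (d - (c - (r - n))) (c - (r - n)) else 0)"
proof -
  have "real c = 1 + real n + real r" if "r < n" "c - r \<le> Suc n" "\<not> c - r \<le> n" "r \<le> c"
    using that by linarith
  then show ?thesis
    using assms by (auto simp: scale_sub_rows_def sylv_p_dp_def Let_def algebra_simps of_nat_diff)
qed

lemma Pmat_rotate_eliminated_minor:
  fixes th :: "nat \<Rightarrow> nat \<Rightarrow> real"
  assumes d: "d = Suc n" and n: "n \<ge> 1"
  defines "M \<equiv> mat_delete (scale_sub_rows (real d) n (sylv_p_dp d th)) n 0"
  shows "mat (n + n) (n + n) (\<lambda>(i,j). M $$ (if i < n then i + n else i - n, j)) = Pmat d th"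
proof -
  have dims: "dim_row (sylv_p_dp d th) = 2*n+1" "dim_col (sylv_p_dp d th) = 2*n+1"
    using sylv_p_dp_carrier[of d th] d by auto
  have M: "M $$ (i,j) =
      (let r = if i < n then i else Suc i; c = Suc j in
       if r < n then
         (if r \<le> c \<and> c - r \<le> d then real (c - r) * th (d - (c - r)) (c - r) else 0)
       else if r - n \<le> c \<and> c - (r - n) \<le> n
         then real (d - (c - (r - n))) * th (d - (c - (r - n))) (c - (r - n)) else 0)"
    if "i < n + n" "j < n + n" for i j
    using that by (simp add: M_def mat_delete_def dims sylv_p_dp_eliminated_entry[OF d] Let_def)
  show ?thesis
    by (rule eq_matI) (use d n in \<open>auto simp: M Pmat_def Let_def Suc_diff_le le_diff_conv\<close>)
qed

lemma Rpdp_eq_Pmat: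
  assumes d: "d = Suc n" and n: "n \<ge> 1"
  shows "real d ^ n * Rpdp d th = real d * th d 0 * det (Pmat d th)"
proof -
  define A where "A = scale_sub_rows (real d) n (sylv_p_dp d th)"
  have S: "sylv_p_dp d th \<in> carrier_mat (2*n+1) (2*n+1)" using sylv_p_dp_carrier[of d th] d by simp
  then have A: "A \<in> carrier_mat (2*n+1) (2*n+1)" unfolding A_def carrier_mat_def by simp
  have "real d ^ n * Rpdp d th = det A"
    unfolding A_def Rpdp_def by (simp add: det_scale_sub_rows[OF S])
  also have "\<dots> = A $$ (n,0) * cofactor A n 0"
    by (rule det_single_entry_column[OF A]) (auto simp: A_def sylv_p_dp_eliminated_entry[OF d])
  also have "A $$ (n,0) = real d * th d 0"
    using n by (simp add: A_def sylv_p_dp_eliminated_entry[OF d])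
  also have "cofactor A n 0 = (-1) ^ n * (-1) ^ (n * n) * det (Pmat d th)"
  proof -
    have "mat_delete A n 0 \<in> carrier_mat (n + n) (n + n)"
      using mat_delete_carrier[OF A, of n 0] by (simp add: mult_2)
    from det_swap_rows[OF this] show ?thesis
      using Pmat_rotate_eliminated_minor[OF d n, of th] by (simp add: cofactor_def A_def)
  qed
  also have "(-1 :: real) ^ n * (-1) ^ (n * n) = 1"
    by (simp add: power_add[symmetric])
  finally show ?thesis by simp
qed

theorem theorem6p2:
  fixes d :: nat and th :: "nat \<Rightarrow> nat \<Rightarrow> real"
  assumes "d \<ge> 2" and "th d 0 \<noteq> 0"
  shows "det (Pmat d th) = real d ^ (d - 2) * Dtheta d th"
proof -
  obtain k where d: "d = Suc (Suc k)" using assms(1) by (metis add_2_eq_Suc le_Suc_ex)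
  have "real d ^ k * Rpdp d th = th d 0 * det (Pmat d th)"
    using Rpdp_eq_Pmat[OF d, of th] by (simp add: d)
  then show ?thesis
    using assms(2) by (simp add: Dtheta_def d field_simps)
qed

end
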